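(* Let $X$ be a set, $T:X\to X$ a map, and $G$ a finite group acting on $X$ such that $g\circ T=T\circ g$ for all $g\in G$. Let $x\in X$ be a periodic point of $T$ and let $k\in\mathbb{N}$. Then the orbit $\mathfrak{O}_T(x)$ shortens in length by a factor of $\frac{1}{k}$ if and only if $|\mathfrak{O}_T(x)\cap\mathfrak{O}_G(x)|=k$. Moreover, if $\mathfrak{O}_T(x)$ shortens in length by a factor of $\frac1k$, then there exists $g\in G$ such that $\mathfrak{O}_T(x)\cap\mathfrak{O}_G(x)=\{g^i(x): i\in\mathbb{N}_0\}$.
   Context: For $x\in X$, $\mathfrak{O}_T(x)=\{T^j(x): j\geqslant 0\}$ is the (closed, i.e. finite) orbit of $x$ under $T$, and $\mathfrak{O}_G(x)=\{g(x):g\in G\}$ is the orbit of $x$ under $G$. Let $X'=G\backslash X=\{\mathfrak{O}_G(x):x\in X\}$, $\pi:X\to X'$, $\pi(x)=\mathfrak{O}_G(x)$, and let $T':X'\to X'$ be the induced map $T'(\mathfrak{O}_G(x))=\mathfrak{O}_G(T(x))$ (well defined since the action commutes with $T$). The orbit $\mathfrak{O}_T(x)$ of a periodic point $x$ "shortens in length by a factor of $\frac1k$" means $|\mathfrak{O}_{T'}(\pi(x))|=\frac{1}{k}|\mathfrak{O}_T(x)|$. *)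

theory Defs
  imports Complex_Main "HOL-Algebra.Group_Action"
begin

definition T_orbit :: "('b \<Rightarrow> 'b) \<Rightarrow> 'b \<Rightarrow> 'b set" where
  "T_orbit T x = {(T ^^ j) x | j. True}"

definition periodic_point :: "('b \<Rightarrow> 'b) \<Rightarrow> 'b \<Rightarrow> bool" where
  "periodic_point T x \<longleftrightarrow> (\<exists>n>0. (T ^^ n) x = x)"

definition orbit_proj :: "('a, 'c) monoid_scheme \<Rightarrow> ('a \<Rightarrow> 'b \<Rightarrow> 'b) \<Rightarrow> 'b \<Rightarrow> 'b set" where
  "orbit_proj G \<phi> x = orbit G \<phi> x"

text \<open>The induced map T' on G\X: T'(O_G(y)) = O_G(T(y)) (choosing a representative y
  of the orbit; well defined when the action commutes with T).\<close>
definition induced_map ::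
  "('a, 'c) monoid_scheme \<Rightarrow> ('a \<Rightarrow> 'b \<Rightarrow> 'b) \<Rightarrow> ('b \<Rightarrow> 'b) \<Rightarrow> 'b set \<Rightarrow> 'b set" where
  "induced_map G \<phi> T S = orbit G \<phi> (T (SOME y. y \<in> S))"

end

theory Submission
  imports Defs "HOL-Combinatorics.Cycles"
begin

text \<open>The map \<open>T\<close> descends to the quotient \<open>G\<setminus>X\<close>, so the \<open>T'\<close>-period \<open>d\<close> of \<open>\<pi>(x)\<close> is the least
  positive return time of the \<open>T\<close>-orbit of \<open>x\<close> to \<open>\<O>\<^sub>G(x)\<close>, and the return times are exactly the
  multiples of \<open>d\<close>. Hence \<open>\<O>\<^sub>T(x) \<inter> \<O>\<^sub>G(x)\<close> is the \<open>T\<^sup>d\<close>-orbit of \<open>x\<close>, which has \<open>p/d\<close> elements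
  when \<open>p\<close> is the \<open>T\<close>-period of \<open>x\<close>. Writing \<open>T\<^sup>d(x) = g(x)\<close>, commutation gives \<open>T\<^sup>i\<^sup>d(x) = g\<^sup>i(x)\<close>.\<close>

lemma least_power_pos:
  "periodic_point f x \<Longrightarrow> 0 < least_power f x"
  unfolding periodic_point_def using least_powerI(2) by metis

lemma funpow_least_power:
  "periodic_point f x \<Longrightarrow> (f ^^ least_power f x) x = x"
  unfolding periodic_point_def using least_powerI(1) by metis

lemma funpow_eq_self_iff_least_power_dvd:
  assumes "periodic_point f x"
  shows "(f ^^ n) x = x \<longleftrightarrow> least_power f x dvd n"
proof
  assume "least_power f x dvd n"
  then have "n mod least_power f x = 0"
    by simp
  then show "(f ^^ n) x = x"
    using funpow_mod_eq[OF funpow_least_power[OF assms], of n] by simp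
qed (rule least_power_minimal)

lemma least_power_unique:
  assumes "0 < m" and iff: "\<And>n. (f ^^ n) x = x \<longleftrightarrow> m dvd n"
  shows "least_power f x = m"
proof (rule dvd_antisym)
  have m: "(f ^^ m) x = x"
    using iff by simp
  then show "least_power f x dvd m"
    by (rule least_power_minimal)
  from \<open>0 < m\<close> m have "periodic_point f x"
    unfolding periodic_point_def by blast
  then show "m dvd least_power f x"
    unfolding iff[symmetric] by (rule funpow_least_power)
qed

lemma least_power_funpow:
  assumes per: "periodic_point f x" and "0 < d" and d: "d dvd least_power f x"
  shows "least_power (f ^^ d) x = least_power f x div d"
proof (rule least_power_unique)
  show "0 < least_power f x div d"
    using least_power_pos[OF per] d by (metis dvd_div_mult_self mult_is_0 not_gr0)
  fix n
  have "((f ^^ d) ^^ n) x = x \<longleftrightarrow> least_power f x dvd d * n"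
    by (simp add: funpow_mult funpow_eq_self_iff_least_power_dvd[OF per])
  also have "\<dots> \<longleftrightarrow> d * (least_power f x div d) dvd d * n"
    using d by simp
  also have "\<dots> \<longleftrightarrow> least_power f x div d dvd n"
    using \<open>0 < d\<close> by simp
  finally show "((f ^^ d) ^^ n) x = x \<longleftrightarrow> least_power f x div d dvd n" .
qed

lemma inj_on_funpow_least_power:
  assumes per: "periodic_point f x"
  shows "inj_on (\<lambda>j. (f ^^ j) x) {..<least_power f x}"
proof -
  let ?p = "least_power f x"
  have "a = b" if "a \<le> b" "b < ?p" and eq: "(f ^^ a) x = (f ^^ b) x" for a b
  proof -
    have "(f ^^ (?p - b + a)) x = (f ^^ (?p - b + b)) x"
      using eq by (simp add: funpow_add)
    also have "\<dots> = x"
      using \<open>b < ?p\<close> funpow_least_power[OF per] by simp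
    finally have "?p dvd ?p - b + a"
      by (rule funpow_eq_self_iff_least_power_dvd[OF per, THEN iffD1])
    moreover have "0 < ?p - b + a"
      using \<open>b < ?p\<close> by simp
    ultimately have "?p \<le> ?p - b + a"
      by (rule dvd_imp_le)
    with that(1,2) show "a = b"
      by linarith
  qed
  then show ?thesis
    unfolding inj_on_def by (metis le_cases lessThan_iff)
qed

lemma periodic_point_funpow:
  assumes "periodic_point f x"
  shows "periodic_point (f ^^ d) x"
proof -
  have "((f ^^ d) ^^ least_power f x) x = x"
    using funpow_eq_self_iff_least_power_dvd[OF assms] by (simp add: funpow_mult)
  then show ?thesis
    unfolding periodic_point_def using least_power_pos[OF assms] by blast
qed

lemma T_orbit_eq_image_least_power:
  assumes "periodic_point f x"
  shows "T_orbit f x = (\<lambda>j. (f ^^ j) x) ` {..<least_power f x}"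
proof -
  have "(f ^^ j) x \<in> (\<lambda>j. (f ^^ j) x) ` {..<least_power f x}" for j
    using funpow_mod_eq[OF funpow_least_power[OF assms], of j] least_power_pos[OF assms]
    by (metis image_eqI lessThan_iff mod_less_divisor)
  then show ?thesis
    unfolding T_orbit_def by auto
qed

lemma card_T_orbit:
  "periodic_point f x \<Longrightarrow> card (T_orbit f x) = least_power f x"
  by (simp add: T_orbit_eq_image_least_power inj_on_funpow_least_power card_image)

lemma real_eq_inverse_mult_iff:
  fixes d m k :: nat
  assumes "0 < d" and "0 < m"
  shows "real d = 1 / real k * real (d * m) \<longleftrightarrow> m = k"
proof (cases "k = 0")
  case False
  then have "real d = 1 / real k * real (d * m) \<longleftrightarrow> real d * real k = real d * real m"
    by (simp add: field_simps)
  also have "\<dots> \<longleftrightarrow> m = k"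
    using \<open>0 < d\<close> by auto
  finally show ?thesis .
qed (use assms in simp)

lemma (in group_action) orbit_eq_iff:
  assumes "y \<in> E" and "z \<in> E"
  shows "orbit G \<phi> y = orbit G \<phi> z \<longleftrightarrow> z \<in> orbit G \<phi> y"
proof
  assume "z \<in> orbit G \<phi> y"
  moreover have "orbit G \<phi> w \<subseteq> E" if "w \<in> E" for w
    using that element_image unfolding orbit_def by blast
  ultimately show "orbit G \<phi> y = orbit G \<phi> z"
    using assms orbit_sym orbit_trans by blast
qed (use assms orbit_refl in simp)

lemma (in group_action) orbit_action_eq:
  assumes "g \<in> carrier G" and "y \<in> E"
  shows "orbit G \<phi> (\<phi> g y) = orbit G \<phi> y"
proof -
  have "\<phi> g y \<in> orbit G \<phi> y"
    using assms(1) unfolding orbit_def by blast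
  then show ?thesis
    using orbit_eq_iff[OF assms(2) element_image[OF assms refl]] by simp
qed

locale commuting_action = group_action +
  fixes T :: "'b \<Rightarrow> 'b"
  assumes T_closed: "y \<in> E \<Longrightarrow> T y \<in> E"
    and action_commute: "g \<in> carrier G \<Longrightarrow> y \<in> E \<Longrightarrow> \<phi> g (T y) = T (\<phi> g y)"
begin

lemma funpow_closed: "y \<in> E \<Longrightarrow> (T ^^ n) y \<in> E"
  by (induction n) (simp_all add: T_closed)

lemma action_funpow_commute:
  "g \<in> carrier G \<Longrightarrow> y \<in> E \<Longrightarrow> \<phi> g ((T ^^ n) y) = (T ^^ n) (\<phi> g y)"
  by (induction n) (simp_all add: action_commute funpow_closed)

lemma induced_map_orbit:
  assumes "y \<in> E"
  shows "induced_map G \<phi> T (orbit G \<phi> y) = orbit G \<phi> (T y)"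
proof -
  have "(SOME y'. y' \<in> orbit G \<phi> y) \<in> orbit G \<phi> y"
    using orbit_refl[OF assms] by (rule someI)
  then obtain g where g: "g \<in> carrier G" "(SOME y'. y' \<in> orbit G \<phi> y) = \<phi> g y"
    unfolding orbit_def by blast
  show ?thesis
    unfolding induced_map_def g(2) action_commute[OF g(1) assms, symmetric]
    by (rule orbit_action_eq[OF g(1) T_closed[OF assms]])
qed

lemma funpow_induced_map:
  "y \<in> E \<Longrightarrow> (induced_map G \<phi> T ^^ n) (orbit G \<phi> y) = orbit G \<phi> ((T ^^ n) y)"
  by (induction n) (simp_all add: induced_map_orbit funpow_closed)

lemma induced_map_return_iff:
  assumes "y \<in> E"
  shows "(induced_map G \<phi> T ^^ n) (orbit_proj G \<phi> y) = orbit_proj G \<phi> y \<longleftrightarrow> (T ^^ n) y \<in> orbit G \<phi> y"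
  unfolding orbit_proj_def funpow_induced_map[OF assms]
  using orbit_eq_iff[OF assms funpow_closed[OF assms]] by auto

lemma periodic_point_induced_map:
  "y \<in> E \<Longrightarrow> periodic_point T y \<Longrightarrow> periodic_point (induced_map G \<phi> T) (orbit_proj G \<phi> y)"
  unfolding periodic_point_def orbit_proj_def by (metis funpow_induced_map)

lemma funpow_eq_action_pow:
  assumes "g \<in> carrier G" "y \<in> E" and "(T ^^ d) y = \<phi> g y"
  shows "((T ^^ d) ^^ i) y = \<phi> (g [^]\<^bsub>G\<^esub> i) y"
proof (induction i)
  case 0
  then show ?case
    using id_eq_one assms(2) by (metis funpow_0 nat_pow_0 restrict_apply')
next
  case (Suc i)
  interpret group G
    using group_hom group_hom.axioms(1) by blast
  have "((T ^^ d) ^^ Suc i) y = (T ^^ d) (\<phi> (g [^] i) y)"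
    using Suc.IH by simp
  also have "\<dots> = \<phi> (g [^] i) ((T ^^ d) y)"
    using action_funpow_commute[OF nat_pow_closed[OF assms(1)] assms(2)] by simp
  also have "\<dots> = \<phi> (g [^] Suc i) y"
    using composition_rule[OF assms(2) nat_pow_closed[OF assms(1)] assms(1)] assms(3)
    by (simp add: nat_pow_Suc)
  finally show ?case .
qed

definition return_time :: "'b \<Rightarrow> nat" where
  "return_time y = least_power (induced_map G \<phi> T) (orbit_proj G \<phi> y)"

lemma return_time_dvd_iff:
  assumes "y \<in> E" and "periodic_point T y"
  shows "return_time y dvd n \<longleftrightarrow> (T ^^ n) y \<in> orbit G \<phi> y"
  unfolding return_time_def
  using funpow_eq_self_iff_least_power_dvd[OF periodic_point_induced_map[OF assms]]
    induced_map_return_iff[OF assms(1)] by simp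

lemma T_orbit_Int_orbit:
  assumes "y \<in> E" and "periodic_point T y"
  shows "T_orbit T y \<inter> orbit G \<phi> y = T_orbit (T ^^ return_time y) y"
  unfolding T_orbit_def funpow_mult
  by (auto simp: return_time_dvd_iff[OF assms, symmetric] elim!: dvdE)

theorem card_T_orbit_eq_mult:
  assumes "y \<in> E" and per: "periodic_point T y"
  shows "card (T_orbit T y)
    = card (T_orbit (induced_map G \<phi> T) (orbit_proj G \<phi> y)) * card (T_orbit T y \<inter> orbit G \<phi> y)"
proof -
  have "return_time y dvd least_power T y"
    using return_time_dvd_iff[OF assms] funpow_least_power[OF per] orbit_refl[OF assms(1)] by simp
  moreover have "0 < return_time y"
    unfolding return_time_def using least_power_pos periodic_point_induced_map[OF assms] .
  ultimately show ?thesis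
    using card_T_orbit[OF per] card_T_orbit[OF periodic_point_induced_map[OF assms]]
      card_T_orbit[OF periodic_point_funpow[OF per]] least_power_funpow[OF per]
    by (simp add: T_orbit_Int_orbit[OF assms] return_time_def[symmetric])
qed

theorem T_orbit_Int_orbit_eq_powers:
  assumes "y \<in> E" and "periodic_point T y"
  shows "\<exists>g \<in> carrier G. T_orbit T y \<inter> orbit G \<phi> y = {\<phi> (g [^]\<^bsub>G\<^esub> i) y | i :: nat. True}"
proof -
  have "(T ^^ return_time y) y \<in> orbit G \<phi> y"
    using return_time_dvd_iff[OF assms, of "return_time y"] by simp
  then obtain g where g: "g \<in> carrier G" "(T ^^ return_time y) y = \<phi> g y"
    unfolding orbit_def by blast
  have "T_orbit (T ^^ return_time y) y = {\<phi> (g [^]\<^bsub>G\<^esub> i) y | i :: nat. True}"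
    unfolding T_orbit_def using funpow_eq_action_pow[OF g(1) assms(1) g(2)] by simp
  then show ?thesis
    unfolding T_orbit_Int_orbit[OF assms] using g(1) by (rule bexI)
qed

end

theorem lemma4:
  fixes G :: "('a, 'c) monoid_scheme" and X :: "'b set" and \<phi> :: "'a \<Rightarrow> 'b \<Rightarrow> 'b"
    and T :: "'b \<Rightarrow> 'b" and x :: 'b and k :: nat
  assumes act: "group_action G X \<phi>"
    and fin: "finite (carrier G)"
    and T_maps: "\<And>y. y \<in> X \<Longrightarrow> T y \<in> X"
    and comm: "\<And>g y. g \<in> carrier G \<Longrightarrow> y \<in> X \<Longrightarrow> \<phi> g (T y) = T (\<phi> g y)"
    and xX: "x \<in> X"
    and per: "periodic_point T x"
  shows "((real (card (T_orbit (induced_map G \<phi> T) (orbit_proj G \<phi> x)))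
            = (1 / real k) * real (card (T_orbit T x)))
         \<longleftrightarrow> card (T_orbit T x \<inter> orbit G \<phi> x) = k)
         \<and> (real (card (T_orbit (induced_map G \<phi> T) (orbit_proj G \<phi> x)))
            = (1 / real k) * real (card (T_orbit T x))
         \<longrightarrow> (\<exists>g \<in> carrier G. T_orbit T x \<inter> orbit G \<phi> x = {\<phi> (g [^]\<^bsub>G\<^esub> i) x | i :: nat. True}))"
proof -
  interpret commuting_action G X \<phi> T
    using act T_maps comm by (simp add: commuting_action_def commuting_action_axioms_def)
  note card_mult = card_T_orbit_eq_mult[OF xX per]
  have "0 < card (T_orbit T x)"
    using card_T_orbit[OF per] least_power_pos[OF per] by simp
  then have pos: "0 < card (T_orbit (induced_map G \<phi> T) (orbit_proj G \<phi> x))"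
    "0 < card (T_orbit T x \<inter> orbit G \<phi> x)"
    by (simp_all add: card_mult)
  have "real (card (T_orbit (induced_map G \<phi> T) (orbit_proj G \<phi> x)))
      = 1 / real k * real (card (T_orbit T x))
    \<longleftrightarrow> card (T_orbit T x \<inter> orbit G \<phi> x) = k"
    unfolding card_mult by (rule real_eq_inverse_mult_iff[OF pos])
  then show ?thesis
    by (intro conjI impI T_orbit_Int_orbit_eq_powers[OF xX per])
qed

end
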